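(* Let $\mathbf X$ be uniformly distributed on $[0,1]^d$ with $\|Y\|_\infty<\infty$, let $K\ge2$, $\gamma_2>0$ and $\gamma_1\ge e/2$. For every fixed binary axis-aligned tree with $K$ leaves (as in the context), $$\int_{[0,1]^d}\big|f_{\lambda^\star}(\mathbf x)-t_{\lambda^\star}(\mathbf x)\big|^2\mu(d\mathbf x)\le2\|Y\|_\infty^2K^2\Big(e^{-2\gamma_2}+\frac{\gamma_2^2K^2\log(2\gamma_1)}{\gamma_1}\Big).$$ Consequently the same bound holds for the expectation over any random tree independent of $\mathbf X$.
   Context: $\mu$ is the law of $\mathbf X$. Tree: root $[0,1]^d$; each internal node with cell $A$ and split $(j,\alpha)$, $\alpha\in[0,1]$, has left child $\{\mathbf x\in A:x^{(j)}<\alpha\}$ and right child $\{\mathbf x\in A:x^{(j)}\ge\alpha\}$; leaves $L_1,\dots,L_K$; internal splits $(j_k,\alpha_k)$, $k=1,\dots,K-1$. $\lambda^\star$: $\mathbf W_1^\star\in\mathbb R^{d\times(K-1)}$ with column $k$ the $j_k$-th unit vector, $(\mathbf b_1^\star)_k=-\alpha_k$; $(\mathbf W_2^\star)_{k,k'}=+1$ (resp. $-1$) if split $k$ is on the root-to-$L_{k'}$ path and that path goes to its right (resp. left) child, else $0$; $(\mathbf b_2^\star)_{k'}=-\ell(k')+\frac12$ with $\ell(k')$ the depth of $L_{k'}$; $(\mathbf W^\star_{\rm out})_{k'}=\frac12\mathbb E[Y\mid\mathbf X\in L_{k'}]$, $b^\star_{\rm out}=\frac12\sum_{k'}\mathbb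 E[Y\mid\mathbf X\in L_{k'}]$. With $\tau(u)=2\mathbf 1_{u\ge0}-1$, $\sigma_i(u)=\tanh(\gamma_iu)$ entrywise: $t_{\lambda^\star}(\mathbf x)=\mathbf W^{\star\top}_{\rm out}\tau(\mathbf W_2^{\star\top}\tau(\mathbf W_1^{\star\top}\mathbf x+\mathbf b_1^\star)+\mathbf b_2^\star)+b^\star_{\rm out}$, $f_{\lambda^\star}(\mathbf x)=\mathbf W^{\star\top}_{\rm out}\sigma_2(\mathbf W_2^{\star\top}\sigma_1(\mathbf W_1^{\star\top}\mathbf x+\mathbf b_1^\star)+\mathbf b_2^\star)+b^\star_{\rm out}$. *)

theory Defs
  imports "HOL-Probability.Probability"
begin

text \<open>Binary axis-aligned tree on [0,1]^d: a node stores the split coordinate j and threshold alpha;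
  left child = {x in A. x_j < alpha}, right child = {x in A. x_j >= alpha}.\<close>
datatype 'd tree = Leaf | Node 'd real "'d tree" "'d tree"

fun leaf_paths :: "'d tree \<Rightarrow> ('d \<times> real \<times> bool) list list" where
  "leaf_paths Leaf = [[]]"
| "leaf_paths (Node j a l r) =
     map (\<lambda>p. (j, a, False) # p) (leaf_paths l) @ map (\<lambda>p. (j, a, True) # p) (leaf_paths r)"

definition num_leaves :: "'d tree \<Rightarrow> nat" where
  "num_leaves t = length (leaf_paths t)"

fun thresholds :: "'d tree \<Rightarrow> real list" where
  "thresholds Leaf = []"
| "thresholds (Node j a l r) = a # thresholds l @ thresholds r"

definition valid_tree :: "'d tree \<Rightarrow> bool" where
  "valid_tree t \<longleftrightarrow> (\<forall>a \<in> set (thresholds t). 0 \<le> a \<and> a \<le> 1)"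

definition unit_cube :: "(real ^ 'd) set" where
  "unit_cube = {x. \<forall>i. 0 \<le> x $ i \<and> x $ i \<le> 1}"

definition leaf_cell :: "('d \<times> real \<times> bool) list \<Rightarrow> (real ^ 'd) set" where
  "leaf_cell p = {x \<in> unit_cube. \<forall>(j, a, b) \<in> set p. if b then a \<le> x $ j else x $ j < a}"

definition cond_mean :: "'s measure \<Rightarrow> ('s \<Rightarrow> real ^ 'd) \<Rightarrow> ('s \<Rightarrow> real) \<Rightarrow> (real ^ 'd) set \<Rightarrow> real" where
  "cond_mean M X Y L =
     (\<integral>\<omega>. indicator L (X \<omega>) * Y \<omega> \<partial>M) / measure M (X -` L \<inter> space M)"

definition step_act :: "real \<Rightarrow> real" where
  "step_act u = 2 * (if 0 \<le> u then 1 else 0) - 1"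

definition tanh_act :: "real \<Rightarrow> real \<Rightarrow> real" where
  "tanh_act g u = tanh (g * u)"

text \<open>The network with parameters lambda* and activations act1, act2, written out:
  the first layer has one unit per internal node k computing act1(x_{j_k} - alpha_k);
  the second layer has one unit per leaf k', computing
  act2(sum over splits on its path of (+-1) * first-layer unit - depth + 1/2);
  output weight for leaf k' is c_{k'}/2 and output bias is (sum c_{k'})/2, with
  c_{k'} = E[Y | X in L_{k'}].\<close>
definition tree_net ::
  "(real \<Rightarrow> real) \<Rightarrow> (real \<Rightarrow> real) \<Rightarrow> (('d \<times> real \<times> bool) list \<Rightarrow> real) \<Rightarrow> 'd tree \<Rightarrow> real ^ 'd \<Rightarrow> real" where
  "tree_net act1 act2 c t x =
     (\<Sum>p\<leftarrow>leaf_paths t. c p / 2 *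
        act2 ((\<Sum>s\<leftarrow>p. (case s of (j, a, b) \<Rightarrow> (if b then 1 else -1) * act1 (x $ j - a)))
              - real (length p) + 1 / 2))
     + (\<Sum>p\<leftarrow>leaf_paths t. c p) / 2"

definition t_star :: "'s measure \<Rightarrow> ('s \<Rightarrow> real ^ 'd) \<Rightarrow> ('s \<Rightarrow> real) \<Rightarrow> 'd tree \<Rightarrow> real ^ 'd \<Rightarrow> real" where
  "t_star M X Y t = tree_net step_act step_act (\<lambda>p. cond_mean M X Y (leaf_cell p)) t"

definition f_star :: "'s measure \<Rightarrow> ('s \<Rightarrow> real ^ 'd) \<Rightarrow> ('s \<Rightarrow> real) \<Rightarrow> real \<Rightarrow> real \<Rightarrow> 'd tree \<Rightarrow> real ^ 'd \<Rightarrow> real" where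
  "f_star M X Y g1 g2 t = tree_net (tanh_act g1) (tanh_act g2) (\<lambda>p. cond_mean M X Y (leaf_cell p)) t"

definition approx_err :: "'s measure \<Rightarrow> ('s \<Rightarrow> real ^ 'd) \<Rightarrow> ('s \<Rightarrow> real) \<Rightarrow> real \<Rightarrow> real \<Rightarrow> 'd tree \<Rightarrow> real" where
  "approx_err M X Y g1 g2 t =
     (\<integral>x. \<bar>f_star M X Y g1 g2 t x - t_star M X Y t x\<bar>^2 \<partial>(distr M lborel X))"

end

theory Submission
  imports Defs
begin

text \<open>On every root-to-leaf path, a first-layer unit of the tanh network differs from the
  corresponding step unit by \<open>1 - tanh (g1 * \<bar>x$j - a\<bar>)\<close>. This is at most \<open>1/g1\<close> outside the
  slab \<open>\<bar>x$j - a\<bar> < ln (2 g1) / (2 g1)\<close>, and under the uniform law the slab has mass at most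
  \<open>ln (2 g1) / g1\<close>. The second-layer input of the step network is a half-integer, so the tanh of
  the second layer is saturated up to \<open>2 exp (- g2)\<close>, and since tanh is 1-Lipschitz the
  first-layer errors reach the second layer multiplied by \<open>g2\<close>. Cauchy-Schwarz over the \<open>K\<close> leaves
  and over the fewer than \<open>K\<close> splits on each path produces the powers of \<open>K\<close>.\<close>

lemma tanh_lipschitz: "\<bar>tanh a - tanh b\<bar> \<le> \<bar>a - b\<bar>" for a b :: real
proof -
  have deriv: "(tanh has_real_derivative 1 - tanh x ^ 2) (at x)" for x :: real
  proof -
    have "cosh x \<noteq> 0" using cosh_real_pos[of x] by linarith
    from has_field_derivative_tanh[where g="\<lambda>x. x" and Db=1, OF this DERIV_ident]
    show ?thesis by simp
  qed
  have "\<bar>tanh b - tanh a\<bar> \<le> \<bar>b - a\<bar>" if "a < b" for a b :: real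
  proof -
    from MVT2[OF that, of tanh "\<lambda>x. 1 - tanh x ^ 2"] deriv obtain z
      where "tanh b - tanh a = (b - a) * (1 - tanh z ^ 2)" by blast
    moreover have "0 \<le> 1 - tanh z ^ 2" "1 - tanh z ^ 2 \<le> 1"
      using tanh_real_bounds[of z] by (auto simp: abs_square_le_1 abs_less_iff)
    ultimately show ?thesis by (simp add: abs_mult mult_left_le)
  qed
  then show ?thesis
    by (cases a b rule: linorder_cases) (auto simp: abs_minus_commute)
qed

lemma one_minus_tanh_le: "1 - tanh y \<le> 2 * exp (- 2 * y)" for y :: real
proof -
  have pos: "0 < exp (- 2 * y)" by simp
  have "1 + exp (- 2 * y) \<noteq> 0" using pos by linarith
  then have "1 - tanh y = 2 * exp (- 2 * y) / (1 + exp (- 2 * y))"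
    unfolding tanh_real_altdef by (simp add: field_simps)
  also have "\<dots> \<le> 2 * exp (- 2 * y) / 1"
    using pos by (intro divide_left_mono) (auto simp: add_pos_pos)
  also have "\<dots> = 2 * exp (- 2 * y)" by simp
  finally show ?thesis .
qed

lemma abs_tanh_act_sub_step_act:
  assumes "0 \<le> g"
  shows "\<bar>tanh_act g u - step_act u\<bar> = 1 - tanh (g * \<bar>u\<bar>)"
  using assms tanh_real_lt_1[of "g * u"] tanh_real_gt_neg1[of "g * u"]
  by (cases "0 \<le> u") (simp_all add: tanh_act_def step_act_def)

lemma sum_list_squared_le:
  fixes f :: "'a \<Rightarrow> real"
  shows "(\<Sum>x\<leftarrow>xs. f x)\<^sup>2 \<le> real (length xs) * (\<Sum>x\<leftarrow>xs. (f x)\<^sup>2)"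
  using sum_squared_le_sum_of_squares[of "\<lambda>i. f (xs ! i)" "{0..<length xs}"]
  by (simp add: sum_list_sum_nth mult.commute)

lemma sum_list_zero_or_le_minus_two:
  "\<forall>s\<in>set xs. h s \<in> {0, - 2 :: real} \<Longrightarrow> (\<Sum>s\<leftarrow>xs. h s) = 0 \<or> (\<Sum>s\<leftarrow>xs. h s) \<le> - 2"
  by (induction xs) auto

lemma integrable_sum_list:
  fixes F :: "'a \<Rightarrow> 'b \<Rightarrow> real"
  assumes "\<And>a. a \<in> set xs \<Longrightarrow> integrable M (F a)"
  shows "integrable M (\<lambda>x. \<Sum>a\<leftarrow>xs. F a x)"
  using assms by (induction xs) auto

lemma integral_sum_list:
  fixes F :: "'a \<Rightarrow> 'b \<Rightarrow> real"
  assumes "\<And>a. a \<in> set xs \<Longrightarrow> integrable M (F a)"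
  shows "(\<integral>x. (\<Sum>a\<leftarrow>xs. F a x) \<partial>M) = (\<Sum>a\<leftarrow>xs. \<integral>x. F a x \<partial>M)"
  using assms by (induction xs) (auto simp: integrable_sum_list)

lemma ln_ge_1_if_ge_exp_half:
  fixes g :: real
  assumes "exp 1 / 2 \<le> g"
  shows "1 \<le> ln (2 * g)" and "1 \<le> g"
proof -
  have "exp 1 \<le> 2 * g" and "0 < exp (1 :: real)" using assms by simp_all
  then have "ln (exp 1) \<le> ln (2 * g)" by (subst ln_le_cancel_iff) linarith+
  then show "1 \<le> ln (2 * g)" by simp
  show "1 \<le> g" using assms exp_ge_add_one_self[of 1] by simp
qed

lemma leaf_paths_nonempty: "leaf_paths t \<noteq> []"
  by (induction t) auto

lemma length_leaf_path_less: "p \<in> set (leaf_paths t) \<Longrightarrow> length p < length (leaf_paths t)"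
proof (induction t arbitrary: p)
  case (Node j a l r)
  have nonempty: "0 < length (leaf_paths l)" "0 < length (leaf_paths r)"
    using leaf_paths_nonempty by auto
  from Node.prems consider
      q where "q \<in> set (leaf_paths l)" "p = (j, a, False) # q"
    | q where "q \<in> set (leaf_paths r)" "p = (j, a, True) # q"
    by auto
  then show ?case
  proof cases
    case 1
    then show ?thesis using Node.IH(1)[of q] nonempty(2) by (simp del: length_greater_0_conv)
  next
    case 2
    then show ?thesis using Node.IH(2)[of q] nonempty(1) by (simp del: length_greater_0_conv)
  qed
qed simp

definition leaf_input :: "(real \<Rightarrow> real) \<Rightarrow> ('d \<times> real \<times> bool) list \<Rightarrow> real ^ 'd \<Rightarrow> real" where
  "leaf_input act p x =
     (\<Sum>(j, a, b)\<leftarrow>p. (if b then 1 else -1) * act (x $ j - a)) - real (length p) + 1 / 2"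

lemma tree_net_leaf_input:
  "tree_net act1 act2 c t x =
     (\<Sum>p\<leftarrow>leaf_paths t. c p / 2 * act2 (leaf_input act1 p x)) + (\<Sum>p\<leftarrow>leaf_paths t. c p) / 2"
  unfolding tree_net_def leaf_input_def ..

lemma abs_leaf_input_step_act_ge: "1 / 2 \<le> \<bar>leaf_input step_act p x\<bar>"
proof -
  define h where "h = (\<lambda>(j, a, b). (if b then 1 else -1) * step_act (x $ j - a) - (1 :: real))"
  have "leaf_input step_act p x = (\<Sum>s\<leftarrow>p. h s) + 1 / 2"
    by (simp add: leaf_input_def h_def sum_list_subtractf sum_list_triv split_def)
  moreover have "\<forall>s\<in>set p. h s \<in> {0, - 2}"
    by (auto simp: h_def step_act_def split: if_splits)
  ultimately show ?thesis
    using sum_list_zero_or_le_minus_two[of p h] by auto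
qed

definition split_error :: "real \<Rightarrow> 'd \<times> real \<times> bool \<Rightarrow> real ^ 'd \<Rightarrow> real" where
  "split_error g s x = (case s of (j, a, b) \<Rightarrow> \<bar>tanh_act g (x $ j - a) - step_act (x $ j - a)\<bar>)"

lemma split_error_eq:
  "0 \<le> g \<Longrightarrow> split_error g (j, a, b) x = 1 - tanh (g * \<bar>x $ j - a\<bar>)"
  by (simp add: split_error_def abs_tanh_act_sub_step_act)

lemma abs_leaf_input_diff_le:
  "\<bar>leaf_input (tanh_act g) p x - leaf_input step_act p x\<bar> \<le> (\<Sum>s\<leftarrow>p. split_error g s x)"
proof -
  have "leaf_input (tanh_act g) p x - leaf_input step_act p x =
      (\<Sum>(j, a, b)\<leftarrow>p. (if b then 1 else -1) * (tanh_act g (x $ j - a) - step_act (x $ j - a)))"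
    unfolding leaf_input_def by (simp add: sum_list_subtractf[symmetric] split_def algebra_simps)
  also have "\<bar>\<dots>\<bar> \<le> (\<Sum>s\<leftarrow>p. split_error g s x)"
    using sum_list_abs
    by (rule order_trans) (auto simp: split_error_def abs_mult split_def o_def intro!: sum_list_mono)
  finally show ?thesis .
qed

text \<open>Inside the slab the split error is at most 1; outside it is at most
  \<open>2 exp (- ln (2 g)) = 1/g\<close>.\<close>
definition split_error_bound :: "real \<Rightarrow> 'd \<times> real \<times> bool \<Rightarrow> real ^ 'd \<Rightarrow> real" where
  "split_error_bound g s x =
     (case s of (j, a, b) \<Rightarrow> indicator {y. \<bar>y $ j - a\<bar> < ln (2 * g) / (2 * g)} x + 1 / g\<^sup>2)"

lemma split_error_squared_le:
  assumes "0 < g"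
  shows "(split_error g s x)\<^sup>2 \<le> split_error_bound g s x"
proof -
  obtain j a b where s: "s = (j, a, b)" by (cases s)
  define u where "u = \<bar>x $ j - a\<bar>"
  have err: "split_error g s x = 1 - tanh (g * u)"
    unfolding s u_def using assms by (simp add: split_error_eq)
  have "0 \<le> 1 - tanh (g * u)" using tanh_real_lt_1[of "g * u"] by simp
  show ?thesis
  proof (cases "u < ln (2 * g) / (2 * g)")
    case True
    have "1 - tanh (g * u) \<le> 1" using assms by (simp add: u_def)
    then have "(split_error g s x)\<^sup>2 \<le> 1"
      unfolding err using \<open>0 \<le> 1 - tanh (g * u)\<close> by (simp add: abs_square_le_1)
    then show ?thesis using True by (simp add: split_error_bound_def s u_def add_increasing2)
  next
    case False
    then have "ln (2 * g) \<le> 2 * (g * u)"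
      using assms by (simp add: not_less pos_divide_le_eq mult_ac)
    then have "1 - tanh (g * u) \<le> 2 * exp (- ln (2 * g))"
      using one_minus_tanh_le[of "g * u"] by (smt (verit) exp_le_cancel_iff)
    also have "\<dots> = 1 / g"
      using assms by (simp add: exp_minus inverse_eq_divide)
    finally have "(split_error g s x)\<^sup>2 \<le> (1 / g)\<^sup>2"
      unfolding err using \<open>0 \<le> 1 - tanh (g * u)\<close> by (intro power_mono)
    then show ?thesis using False by (simp add: split_error_bound_def s u_def power_divide)
  qed
qed

lemma leaf_output_error_squared_le:
  assumes "0 < g1" and "0 < g2" and "length p \<le> K"
  shows "\<bar>tanh_act g2 (leaf_input (tanh_act g1) p x) - step_act (leaf_input step_act p x)\<bar>\<^sup>2
    \<le> 8 * exp (- 2 * g2) + 2 * g2\<^sup>2 * real K * (\<Sum>s\<leftarrow>p. split_error_bound g1 s x)"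
proof -
  define Zf where "Zf = leaf_input (tanh_act g1) p x"
  define Zs where "Zs = leaf_input step_act p x"
  define S where "S = (\<Sum>s\<leftarrow>p. split_error g1 s x)"
  define A where "A = \<bar>tanh_act g2 Zs - step_act Zs\<bar>"
  define D where "D = \<bar>tanh_act g2 Zf - tanh_act g2 Zs\<bar>"
  have "tanh (g2 * (1 / 2)) \<le> tanh (g2 * \<bar>Zs\<bar>)"
    using abs_leaf_input_step_act_ge[of p x] \<open>0 < g2\<close> unfolding Zs_def by simp
  then have "A \<le> 1 - tanh (g2 * (1 / 2))"
    using \<open>0 < g2\<close> by (simp add: A_def abs_tanh_act_sub_step_act)
  also have "\<dots> \<le> 2 * exp (- g2)"
    using one_minus_tanh_le[of "g2 * (1 / 2)"] by simp
  finally have "A\<^sup>2 \<le> (2 * exp (- g2))\<^sup>2"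
    by (intro power_mono) (simp_all add: A_def)
  also have "\<dots> = 4 * exp (- 2 * g2)"
    by (simp add: power2_eq_square flip: exp_add)
  finally have A_sq: "A\<^sup>2 \<le> 4 * exp (- 2 * g2)" .
  have "D \<le> \<bar>g2 * Zf - g2 * Zs\<bar>"
    unfolding D_def tanh_act_def by (rule tanh_lipschitz)
  also have "\<dots> \<le> g2 * S"
    using abs_leaf_input_diff_le[of g1 p x] \<open>0 < g2\<close>
    by (simp add: Zf_def Zs_def S_def abs_mult flip: right_diff_distrib)
  finally have "D\<^sup>2 \<le> g2\<^sup>2 * S\<^sup>2"
    using power_mono[of D "g2 * S" 2] by (simp add: D_def power_mult_distrib)
  also have "\<dots> \<le> g2\<^sup>2 * (real K * (\<Sum>s\<leftarrow>p. split_error_bound g1 s x))"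
  proof (intro mult_left_mono)
    have "S\<^sup>2 \<le> real (length p) * (\<Sum>s\<leftarrow>p. (split_error g1 s x)\<^sup>2)"
      unfolding S_def by (rule sum_list_squared_le)
    also have "\<dots> \<le> real K * (\<Sum>s\<leftarrow>p. split_error_bound g1 s x)"
      using assms by (intro mult_mono sum_list_mono sum_list_nonneg split_error_squared_le) auto
    finally show "S\<^sup>2 \<le> real K * (\<Sum>s\<leftarrow>p. split_error_bound g1 s x)" .
  qed simp
  finally have D_sq: "D\<^sup>2 \<le> g2\<^sup>2 * (real K * (\<Sum>s\<leftarrow>p. split_error_bound g1 s x))" .
  have "\<bar>tanh_act g2 Zf - step_act Zs\<bar>\<^sup>2 \<le> (A + D)\<^sup>2"
    by (rule power_mono) (simp_all add: A_def D_def)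
  also have "\<dots> \<le> 2 * A\<^sup>2 + 2 * D\<^sup>2"
    using sum_squares_ge_zero[of "A - D" 0] by (simp add: power2_eq_square algebra_simps)
  finally show ?thesis
    using A_sq D_sq by (simp add: Zf_def Zs_def)
qed

lemma tree_net_error_squared_le:
  assumes "0 < g1" and "0 < g2" and c_le: "\<And>p. \<bar>c p\<bar> \<le> B"
    and leaves: "length (leaf_paths t) = K"
  shows "\<bar>tree_net (tanh_act g1) (tanh_act g2) c t x - tree_net step_act step_act c t x\<bar>\<^sup>2
    \<le> 2 * B\<^sup>2 * (real K)\<^sup>2 * exp (- 2 * g2)
       + B\<^sup>2 * (real K)\<^sup>2 * g2\<^sup>2 / 2 * (\<Sum>p\<leftarrow>leaf_paths t. \<Sum>s\<leftarrow>p. split_error_bound g1 s x)"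
proof -
  define P where "P = leaf_paths t"
  define w where "w p = \<bar>tanh_act g2 (leaf_input (tanh_act g1) p x) - step_act (leaf_input step_act p x)\<bar>" for p
  define H where "H p = (\<Sum>s\<leftarrow>p. split_error_bound g1 s x)" for p
  have "\<bar>tree_net (tanh_act g1) (tanh_act g2) c t x - tree_net step_act step_act c t x\<bar>
      = \<bar>\<Sum>p\<leftarrow>P. c p / 2 * (tanh_act g2 (leaf_input (tanh_act g1) p x) - step_act (leaf_input step_act p x))\<bar>"
    unfolding tree_net_leaf_input P_def by (simp add: sum_list_subtractf[symmetric] right_diff_distrib)
  also have "\<dots> \<le> (\<Sum>p\<leftarrow>P. B / 2 * w p)"
    using sum_list_abs by (rule order_trans)
      (auto simp: o_def w_def abs_mult intro!: sum_list_mono mult_right_mono c_le)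
  finally have "\<bar>tree_net (tanh_act g1) (tanh_act g2) c t x - tree_net step_act step_act c t x\<bar>\<^sup>2
      \<le> (\<Sum>p\<leftarrow>P. B / 2 * w p)\<^sup>2"
    by (rule power_mono) simp
  also have "\<dots> \<le> real K * (\<Sum>p\<leftarrow>P. (B / 2 * w p)\<^sup>2)"
    using sum_list_squared_le[of "\<lambda>p. B / 2 * w p" P] leaves by (simp add: P_def)
  also have "\<dots> = real K * B\<^sup>2 / 4 * (\<Sum>p\<leftarrow>P. (w p)\<^sup>2)"
    by (induction P) (simp_all add: power_mult_distrib power_divide algebra_simps)
  also have "\<dots> \<le> real K * B\<^sup>2 / 4 * (\<Sum>p\<leftarrow>P. 8 * exp (- 2 * g2) + 2 * g2\<^sup>2 * real K * H p)"
  proof (intro mult_left_mono sum_list_mono)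
    fix p assume "p \<in> set P"
    then have "length p \<le> K"
      using length_leaf_path_less[of p t] leaves by (simp add: P_def)
    then show "(w p)\<^sup>2 \<le> 8 * exp (- 2 * g2) + 2 * g2\<^sup>2 * real K * H p"
      unfolding w_def H_def using assms by (intro leaf_output_error_squared_le)
  qed simp
  also have "\<dots> = 2 * B\<^sup>2 * (real K)\<^sup>2 * exp (- 2 * g2) + B\<^sup>2 * (real K)\<^sup>2 * g2\<^sup>2 / 2 * (\<Sum>p\<leftarrow>P. H p)"
    using leaves by (simp add: P_def sum_list_addf sum_list_const_mult sum_list_mult_const sum_list_triv
        power2_eq_square algebra_simps)
  finally show ?thesis by (simp add: P_def H_def)
qed

lemma cond_mean_abs_le:
  assumes "prob_space M" and bound: "AE \<omega> in M. \<bar>Y \<omega>\<bar> \<le> B" and "0 \<le> B"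
  shows "\<bar>cond_mean M X Y L\<bar> \<le> B"
proof -
  interpret M: prob_space M by fact
  define E where "E = X -` L \<inter> space M"
  have E_eq: "cond_mean M X Y L = (\<integral>\<omega>. indicator L (X \<omega>) * Y \<omega> \<partial>M) / measure M E"
    unfolding cond_mean_def E_def ..
  show ?thesis
  proof (cases "E \<in> sets M \<and> measure M E \<noteq> 0")
    case False
    \<comment> \<open>then \<open>cond_mean\<close> is a division by zero, hence 0\<close>
    then have "measure M E = 0" by (auto simp: measure_notin_sets)
    then show ?thesis unfolding E_eq using \<open>0 \<le> B\<close> by simp
  next
    case True
    then have E: "E \<in> sets M" and pos: "0 < measure M E"
      using measure_nonneg[of M E] by linarith+
    have "AE \<omega> in M. \<bar>indicator L (X \<omega>) * Y \<omega>\<bar> \<le> B * indicator E \<omega>"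
      using bound by (rule AE_mp) (rule AE_I2, auto simp: E_def indicator_def)
    then have "(\<integral>\<omega>. \<bar>indicator L (X \<omega>) * Y \<omega>\<bar> \<partial>M) \<le> (\<integral>\<omega>. B * indicator E \<omega> \<partial>M)"
      using E \<open>0 \<le> B\<close>
      by (intro integral_mono_AE') (auto simp: M.emeasure_finite less_top[symmetric])
    then have "\<bar>\<integral>\<omega>. indicator L (X \<omega>) * Y \<omega> \<partial>M\<bar> \<le> (\<integral>\<omega>. B * indicator E \<omega> \<partial>M)"
      by (rule order_trans[OF integral_abs_bound])
    also have "\<dots> = B * measure M E"
      using E by (simp add: Int_absorb2 sets.sets_into_space)
    finally have "\<bar>\<integral>\<omega>. indicator L (X \<omega>) * Y \<omega> \<partial>M\<bar> \<le> B * measure M E" .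
    then show ?thesis unfolding E_eq using pos by (simp add: abs_divide pos_divide_le_eq)
  qed
qed

lemma emeasure_lborel_cbox_cart:
  "cbox a (b :: real ^ 'd) \<noteq> {} \<Longrightarrow> emeasure lborel (cbox a b) = ennreal (\<Prod>i\<in>UNIV. b $ i - a $ i)"
  using emeasure_eq_ennreal_measure[of lborel "cbox a b"] emeasure_lborel_cbox_finite[of a b]
    content_cbox_cart[of a b] by simp

lemma unit_cube_eq_cbox: "(unit_cube :: (real ^ 'd) set) = cbox 0 1"
  unfolding unit_cube_def by (auto simp: mem_box_cart)

lemma emeasure_unit_cube: "emeasure lborel (unit_cube :: (real ^ 'd) set) = 1"
proof -
  have "(0 :: real ^ 'd) \<in> cbox 0 1" by (simp add: mem_box_cart)
  then show ?thesis unfolding unit_cube_eq_cbox by (subst emeasure_lborel_cbox_cart) auto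
qed

lemma sets_lborel_unit_cube: "(unit_cube :: (real ^ 'd) set) \<in> sets lborel"
  by (simp add: unit_cube_eq_cbox)

lemma prob_space_uniform_unit_cube: "prob_space (uniform_measure lborel (unit_cube :: (real ^ 'd) set))"
  by (rule prob_space_uniform_measure) (simp_all add: sets_lborel_unit_cube emeasure_unit_cube)

lemma measure_uniform_unit_cube_slab_le:
  assumes "0 < e"
  shows "measure (uniform_measure lborel (unit_cube :: (real ^ 'd) set)) {y. \<bar>y $ j - a\<bar> < e} \<le> 2 * e"
proof -
  define S :: "(real ^ 'd) set" where "S = {y. \<bar>y $ j - a\<bar> < e}"
  define l :: "real ^ 'd" where "l = (\<chi> i. if i = j then a - e else 0)"
  define u :: "real ^ 'd" where "u = (\<chi> i. if i = j then a + e else 1)"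
  have S: "S \<in> sets lborel" unfolding S_def by measurable
  have "l \<in> cbox l u" using assms by (auto simp: l_def u_def mem_box_cart)
  then have box: "emeasure lborel (cbox l u) = ennreal (2 * e)"
    by (subst emeasure_lborel_cbox_cart) (auto simp: l_def u_def if_distrib prod.delta cong: if_cong)
  have "emeasure (uniform_measure lborel unit_cube) S = emeasure lborel (unit_cube \<inter> S)"
    using emeasure_uniform_measure[OF sets_lborel_unit_cube S]
    by (simp add: emeasure_unit_cube divide_ennreal_def)
  also have "\<dots> \<le> emeasure lborel (cbox l u)"
    by (rule emeasure_mono) (auto simp: unit_cube_def S_def l_def u_def mem_box_cart)
  finally have "emeasure (uniform_measure lborel (unit_cube :: (real ^ 'd) set)) S \<le> ennreal (2 * e)"
    unfolding box .
  then show ?thesis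
    unfolding S_def measure_def using assms by (simp add: enn2real_leI)
qed

lemma integral_split_error_bound_le:
  assumes "exp 1 / 2 \<le> g"
  defines "U \<equiv> uniform_measure lborel (unit_cube :: (real ^ 'd) set)"
  shows "integrable U (split_error_bound g s)"
    and "integral\<^sup>L U (split_error_bound g s) \<le> 2 * ln (2 * g) / g"
proof -
  interpret U: prob_space U unfolding U_def by (rule prob_space_uniform_unit_cube)
  obtain j a b where s: "s = (j, a, b)" by (cases s)
  define S :: "(real ^ 'd) set" where "S = {y. \<bar>y $ j - a\<bar> < ln (2 * g) / (2 * g)}"
  have ln_ge: "1 \<le> ln (2 * g)" and g_ge: "1 \<le> g"
    using ln_ge_1_if_ge_exp_half[OF assms(1)] by auto
  have bound_eq: "split_error_bound g s = (\<lambda>x. indicator S x + 1 / g\<^sup>2)"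
    by (auto simp: split_error_bound_def s S_def)
  have S: "S \<in> sets U" unfolding S_def U_def by measurable
  then have int_S: "integrable U (indicator S :: _ \<Rightarrow> real)"
    by (simp add: U.emeasure_finite less_top[symmetric])
  then show "integrable U (split_error_bound g s)" by (simp add: bound_eq)
  have "integral\<^sup>L U (split_error_bound g s) = measure U S + 1 / g\<^sup>2"
    using int_S S U.prob_space by (simp add: bound_eq)
  also have "measure U S \<le> ln (2 * g) / g"
    using measure_uniform_unit_cube_slab_le[of "ln (2 * g) / (2 * g)" j a] ln_ge g_ge
    by (simp add: U_def S_def)
  also have "1 / g\<^sup>2 \<le> ln (2 * g) / g"
    using ln_ge g_ge mult_mono[of 1 "ln (2 * g)" 1 g] by (simp add: power2_eq_square divide_le_eq)
  finally show "integral\<^sup>L U (split_error_bound g s) \<le> 2 * ln (2 * g) / g" by simp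
qed

lemma integral_sum_split_error_bounds_le:
  assumes "exp 1 / 2 \<le> g" and "length P \<le> K" and "\<And>p. p \<in> set P \<Longrightarrow> length p \<le> K"
  defines "U \<equiv> uniform_measure lborel (unit_cube :: (real ^ 'd) set)"
    and "F \<equiv> \<lambda>x. \<Sum>p\<leftarrow>P. \<Sum>s\<leftarrow>p. split_error_bound g s x"
  shows "integrable U F" and "integral\<^sup>L U F \<le> 2 * (real K)\<^sup>2 * ln (2 * g) / g"
proof -
  note bound = integral_split_error_bound_le[OF assms(1)]
  have int_path: "integrable U (\<lambda>x. \<Sum>s\<leftarrow>p. split_error_bound g s x)" for p
    unfolding U_def by (intro integrable_sum_list bound)
  then show "integrable U F" unfolding F_def by (rule integrable_sum_list)
  have "integral\<^sup>L U F = (\<Sum>p\<leftarrow>P. \<Sum>s\<leftarrow>p. integral\<^sup>L U (split_error_bound g s))"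
    unfolding F_def U_def using int_path[unfolded U_def]
    by (simp add: integral_sum_list bound)
  also have "\<dots> \<le> (\<Sum>p\<leftarrow>P. \<Sum>s\<leftarrow>p. 2 * ln (2 * g) / g)"
    unfolding U_def by (intro sum_list_mono bound(2))
  also have "\<dots> = (\<Sum>p\<leftarrow>P. real (length p) * (2 * ln (2 * g) / g))"
    by (simp add: sum_list_triv)
  also have "\<dots> \<le> (\<Sum>p\<leftarrow>P. real K * (2 * ln (2 * g) / g))"
    using assms(3) ln_ge_1_if_ge_exp_half[OF assms(1)]
    by (intro sum_list_mono mult_right_mono) auto
  also have "\<dots> = real (length P) * (real K * (2 * ln (2 * g) / g))"
    by (simp add: sum_list_triv)
  also have "\<dots> \<le> real K * (real K * (2 * ln (2 * g) / g))"
    using assms(2) ln_ge_1_if_ge_exp_half[OF assms(1)] by (intro mult_right_mono) auto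
  finally show "integral\<^sup>L U F \<le> 2 * (real K)\<^sup>2 * ln (2 * g) / g"
    by (simp add: power2_eq_square mult_ac)
qed

lemma approx_err_le:
  fixes t :: "'d :: finite tree"
  assumes "prob_space M" and X: "distr M lborel X = uniform_measure lborel unit_cube"
    and Y: "AE \<omega> in M. \<bar>Y \<omega>\<bar> \<le> B" and "0 \<le> B"
    and "0 < g2" and g1: "exp 1 / 2 \<le> g1" and leaves: "num_leaves t = K"
  shows "approx_err M X Y g1 g2 t
    \<le> 2 * B\<^sup>2 * (real K)\<^sup>2 * (exp (- 2 * g2) + g2\<^sup>2 * (real K)\<^sup>2 * ln (2 * g1) / g1)"
proof -
  let ?U = "uniform_measure lborel (unit_cube :: (real ^ 'd) set)"
  interpret U: prob_space ?U by (rule prob_space_uniform_unit_cube)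
  define F where "F x = (\<Sum>p\<leftarrow>leaf_paths t. \<Sum>s\<leftarrow>p. split_error_bound g1 s x)" for x
  define C where "C = B\<^sup>2 * (real K)\<^sup>2 * g2\<^sup>2 / 2"
  have length_paths: "length (leaf_paths t) = K" using leaves by (simp add: num_leaves_def)
  have g1_pos: "0 < g1" using ln_ge_1_if_ge_exp_half(2)[OF g1] by simp
  have F: "integrable ?U F" "integral\<^sup>L ?U F \<le> 2 * (real K)\<^sup>2 * ln (2 * g1) / g1"
    using integral_sum_split_error_bounds_le[OF g1, of "leaf_paths t" K] length_paths
      length_leaf_path_less[of _ t]
    by (auto simp: F_def[abs_def] less_imp_le)
  have "approx_err M X Y g1 g2 t
      = (\<integral>x. \<bar>f_star M X Y g1 g2 t x - t_star M X Y t x\<bar>\<^sup>2 \<partial>?U)"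
    unfolding approx_err_def X ..
  also have "\<dots> \<le> (\<integral>x. 2 * B\<^sup>2 * (real K)\<^sup>2 * exp (- 2 * g2) + C * F x \<partial>?U)"
  proof (rule integral_mono_AE')
    show "integrable ?U (\<lambda>x. 2 * B\<^sup>2 * (real K)\<^sup>2 * exp (- 2 * g2) + C * F x)"
      using F by simp
    show "AE x in ?U. \<bar>f_star M X Y g1 g2 t x - t_star M X Y t x\<bar>\<^sup>2
        \<le> 2 * B\<^sup>2 * (real K)\<^sup>2 * exp (- 2 * g2) + C * F x"
      unfolding f_star_def t_star_def C_def F_def
      by (intro AE_I2 tree_net_error_squared_le g1_pos \<open>0 < g2\<close> length_paths
          cond_mean_abs_le[OF assms(1) Y \<open>0 \<le> B\<close>])
    then show "AE x in ?U. 0 \<le> 2 * B\<^sup>2 * (real K)\<^sup>2 * exp (- 2 * g2) + C * F x"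
      by eventually_elim (erule order_trans[rotated], simp)
  qed
  also have "\<dots> = 2 * B\<^sup>2 * (real K)\<^sup>2 * exp (- 2 * g2) + C * integral\<^sup>L ?U F"
    using F(1) U.prob_space by simp
  also have "\<dots> \<le> 2 * B\<^sup>2 * (real K)\<^sup>2 * exp (- 2 * g2) + C * (2 * (real K)\<^sup>2 * ln (2 * g1) / g1)"
    using F(2) by (intro add_left_mono mult_left_mono) (simp_all add: C_def)
  also have "\<dots> = 2 * B\<^sup>2 * (real K)\<^sup>2 * exp (- 2 * g2) + B\<^sup>2 * (real K)\<^sup>2 * (g2\<^sup>2 * (real K)\<^sup>2 * ln (2 * g1) / g1)"
    by (simp add: C_def)
  also have "\<dots> \<le> 2 * B\<^sup>2 * (real K)\<^sup>2 * (exp (- 2 * g2) + g2\<^sup>2 * (real K)\<^sup>2 * ln (2 * g1) / g1)"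
  proof -
    have "0 \<le> B\<^sup>2 * (real K)\<^sup>2 * (g2\<^sup>2 * (real K)\<^sup>2 * ln (2 * g1) / g1)"
      using ln_ge_1_if_ge_exp_half[OF g1] by simp
    then show ?thesis by (simp add: algebra_simps)
  qed
  finally show ?thesis .
qed

theorem mainTheorem6:
  fixes M :: "'s measure" and X :: "'s \<Rightarrow> real ^ 'd" and Y :: "'s \<Rightarrow> real"
    and B g1 g2 :: real and K :: nat
  assumes "prob_space M"
    and "X \<in> borel_measurable M" and "Y \<in> borel_measurable M"
    and "distr M lborel X = uniform_measure lborel unit_cube"
    and "AE \<omega> in M. \<bar>Y \<omega>\<bar> \<le> B"
    and "K \<ge> 2" and "g2 > 0" and "g1 \<ge> exp 1 / 2"
  shows "(\<forall>t :: 'd tree. valid_tree t \<and> num_leaves t = K \<longrightarrow>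
            approx_err M X Y g1 g2 t
              \<le> 2 * B^2 * (real K)^2 * (exp (- 2 * g2) + g2^2 * (real K)^2 * ln (2 * g1) / g1))
       \<and> (\<forall>T :: 'd tree measure. prob_space T \<and> (\<forall>t \<in> space T. valid_tree t \<and> num_leaves t = K) \<longrightarrow>
            (\<integral>t. approx_err M X Y g1 g2 t \<partial>T)
              \<le> 2 * B^2 * (real K)^2 * (exp (- 2 * g2) + g2^2 * (real K)^2 * ln (2 * g1) / g1))"
proof -
  define R where "R = 2 * B^2 * (real K)^2 * (exp (- 2 * g2) + g2^2 * (real K)^2 * ln (2 * g1) / g1)"
  have "AE \<omega> in M. 0 \<le> B"
    using assms(5) by eventually_elim auto
  then have "0 \<le> B" by (simp add: prob_space.AE_const[OF assms(1)])
  then have tree: "approx_err M X Y g1 g2 t \<le> R" if "num_leaves t = K" for t :: "'d tree"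
    unfolding R_def using assms that by (intro approx_err_le)
  have "0 \<le> R"
    using ln_ge_1_if_ge_exp_half[OF assms(8)] unfolding R_def by simp
  have "(\<integral>t. approx_err M X Y g1 g2 t \<partial>T) \<le> R"
    if "prob_space T" and "\<forall>t \<in> space T. num_leaves t = K" for T :: "'d tree measure"
  proof -
    interpret T: prob_space T by fact
    have "(\<integral>t. approx_err M X Y g1 g2 t \<partial>T) \<le> (\<integral>t. R \<partial>T)"
      using that tree \<open>0 \<le> R\<close> by (intro integral_mono') auto
    also have "\<dots> = R" using T.prob_space by simp
    finally show ?thesis .
  qed
  then show ?thesis unfolding R_def[symmetric] using tree by blast
qed

end
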